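(* Let $R$ be a System F type (possibly containing the type variable $X$ free) with $X\in^+R$, and let $\gamma$ be an environment defined on the free type variables of $D_{\mathrm{param}}$. Then $\mathit{rebuild}_{X,R}\ \llbracket D_{\mathrm{param}}\to D_{\mathrm{param}}\rrbracket_\gamma\ I$.
   Context: Terms are those of the pure untyped $\lambda$-calculus, up to $\alpha$-equivalence; $=_{\beta\eta}$ is $\beta\eta$-convertibility. System F types $T ::= X\mid T\to T'\mid\forall X.T$. A relation on terms is $\beta\eta$-closed if closed under replacing either related term by a $\beta\eta$-equal one; $\mathcal{R}$ is the set of such relations; environments $\gamma$ map finitely many type variables to $\mathcal{R}$. Interpretation: $\llbracket X\rrbracket_\gamma=\gamma(X)$; $t\,\llbracket T\to T'\rrbracket_\gamma\,t'$ iff for all $a,a'$ with $a\,\llbracket T\rrbracket_\gamma\,a'$, $t\,a\,\llbracket T'\rrbracket_\gamma\,t'\,a'$; $\llbracket \forall X.T\rrbracket_\gamma=\bigcap_{r\in\mathcal{R}}\llbracket T\rrbracket_{\gamma[X\mapsto r]}$. $X\in^pT$ (polarities $p\in\{+,-\}$, $\bar p$ the other): $X\in^+X$; $X\in^pY$ for variables $Y\ne X$; $X\in^p(T\to T')$ iff $X\in^{\bar p}T$ and $X\in^pT'$; $X\in^p\forall Y.T$ iff $X\in^pT$. Terms: $I:=\lambda x.x$, $K:=\lambda x.\lambda y.x$, $t\circ t':=\lambda x.t\,(t'\,x)$. $\mathit{fmap}_{X,R}$ is defined by recursion on $R$: $\mathit{fmap}_{X,X}=I$; $\mathit{fmap}_{X,Y}=K\,I$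 ($Y\ne X$); $\mathit{fmap}_{X,R\to R'}=\lambda f.\lambda a.\,\mathit{fmap}_{X,R'}\,f\circ a\circ\mathit{fmap}_{X,R}\,f$; $\mathit{fmap}_{X,\forall Y.R}=\lambda f.\,\mathit{fmap}_{X,R}\,f$ (bound variable chosen different from $X$). $\mathit{fold}:=\lambda a.\lambda x.x\,a$; $\mathit{in}_{X,R}:=\lambda x.\lambda a.\,a\,(\mathit{fmap}_{X,R}\,(\mathit{fold}\,a)\,x)$; $\mathit{rebuild}_{X,R}:=\mathit{fold}\ \mathit{in}_{X,R}$; $D_{\mathrm{param}}:=\forall X.(R\to X)\to X$. *)

theory Defs
  imports Main
begin

datatype dB = Var nat | App dB dB | Abs dB

primrec lift :: "dB \<Rightarrow> nat \<Rightarrow> dB" where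
  "lift (Var i) k = (if i < k then Var i else Var (Suc i))"
| "lift (App s t) k = App (lift s k) (lift t k)"
| "lift (Abs s) k = Abs (lift s (Suc k))"

primrec subst :: "dB \<Rightarrow> dB \<Rightarrow> nat \<Rightarrow> dB" where
  "subst (Var i) s k = (if k < i then Var (i - 1) else if i = k then s else Var i)"
| "subst (App t u) s k = App (subst t s k) (subst u s k)"
| "subst (Abs t) s k = Abs (subst t (lift s 0) (Suc k))"

inductive step :: "dB \<Rightarrow> dB \<Rightarrow> bool" where
  beta: "step (App (Abs s) t) (subst s t 0)"
| eta: "step (Abs (App (lift s 0) (Var 0))) s"
| appL: "step s s' \<Longrightarrow> step (App s t) (App s' t)"
| appR: "step t t' \<Longrightarrow> step (App s t) (App s t')"
| abs: "step s s' \<Longrightarrow> step (Abs s) (Abs s')"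

definition betaeta_eq :: "dB \<Rightarrow> dB \<Rightarrow> bool" where
  "betaeta_eq = equivclp step"

type_synonym rel = "dB \<Rightarrow> dB \<Rightarrow> bool"

definition betaeta_closed :: "rel \<Rightarrow> bool" where
  "betaeta_closed r \<longleftrightarrow>
     (\<forall>t t' s s'. r t t' \<and> betaeta_eq t s \<and> betaeta_eq t' s' \<longrightarrow> r s s')"

type_synonym tvar = nat

datatype ty = TVar tvar | Arr ty ty | All tvar ty

primrec ftv :: "ty \<Rightarrow> tvar set" where
  "ftv (TVar X) = {X}"
| "ftv (Arr T T') = ftv T \<union> ftv T'"
| "ftv (All Y T) = ftv T - {Y}"

type_synonym env = "tvar \<Rightarrow> rel option"

primrec interp :: "env \<Rightarrow> ty \<Rightarrow> rel" where
  "interp \<gamma> (TVar X) = (case \<gamma> X of Some r \<Rightarrow> r | None \<Rightarrow> (\<lambda>_ _. False))"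
| "interp \<gamma> (Arr T T') =
     (\<lambda>t t'. \<forall>a a'. interp \<gamma> T a a' \<longrightarrow> interp \<gamma> T' (App t a) (App t' a'))"
| "interp \<gamma> (All X T) =
     (\<lambda>t t'. \<forall>r. betaeta_closed r \<longrightarrow> interp (\<gamma>(X \<mapsto> r)) T t t')"

text \<open>Polarity: occ X True T means X \<in>+ T, occ X False T means X \<in>- T.\<close>
primrec occ :: "tvar \<Rightarrow> bool \<Rightarrow> ty \<Rightarrow> bool" where
  "occ X p (TVar Y) = (if Y = X then p else True)"
| "occ X p (Arr T T') = (occ X (\<not> p) T \<and> occ X p T')"
| "occ X p (All Y T) = occ X p T"

definition I :: dB where "I = Abs (Var 0)"
definition K :: dB where "K = Abs (Abs (Var 1))"
definition comp :: "dB \<Rightarrow> dB \<Rightarrow> dB" where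
  "comp t t' = Abs (App (lift t 0) (App (lift t' 0) (Var 0)))"

text \<open>fmap' (Some X) R is fmap_{X,R}; fmap' None R is the map where the (renamed) bound
  X no longer occurs, used when a binder \<forall>X shadows X (bound variable chosen \<noteq> X).\<close>
primrec fmap' :: "tvar option \<Rightarrow> ty \<Rightarrow> dB" where
  "fmap' x (TVar Y) = (if x = Some Y then I else App K I)"
| "fmap' x (Arr R R') =
     Abs (Abs (comp (App (fmap' x R') (Var 1)) (comp (Var 0) (App (fmap' x R) (Var 1)))))"
| "fmap' x (All Y R) = Abs (App (fmap' (if x = Some Y then None else x) R) (Var 0))"

definition fmap :: "tvar \<Rightarrow> ty \<Rightarrow> dB" where
  "fmap X R = fmap' (Some X) R"

definition fold :: dB where "fold = Abs (Abs (App (Var 0) (Var 1)))"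

definition inn :: "tvar \<Rightarrow> ty \<Rightarrow> dB" where
  "inn X R = Abs (Abs (App (Var 0) (App (App (fmap X R) (App fold (Var 0))) (Var 1))))"

definition rebuild :: "tvar \<Rightarrow> ty \<Rightarrow> dB" where
  "rebuild X R = App fold (inn X R)"

definition Dparam :: "tvar \<Rightarrow> ty \<Rightarrow> ty" where
  "Dparam X R = All X (Arr (Arr R (TVar X)) (TVar X))"

end

theory Submission
  imports Defs
begin

(* Given t related to t' at D_param, a beta-eta-closed relation r
   and a related to a' at R -> X, instantiate the hypothesis on t at the relation
   r' u u' := r (u a) u'. Since fold a u reduces to u a, the term fold a maps r' into r, so by
   the relational functoriality of fmap in the positive variable X the term in_{X,R} is related
   to a' at R -> X under X := r'. Hence t in_{X,R} a is r-related to t' a', and rebuild t a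
   reduces to t in_{X,R} a. *)

notation betaeta_eq (infix "=\<^sub>\<beta>\<^sub>\<eta>" 50)

lemma betaeta_eq_refl [simp]: "t =\<^sub>\<beta>\<^sub>\<eta> t"
  by (simp add: betaeta_eq_def)

lemma betaeta_eq_sym: "s =\<^sub>\<beta>\<^sub>\<eta> t \<Longrightarrow> t =\<^sub>\<beta>\<^sub>\<eta> s"
  by (simp add: betaeta_eq_def equivclp_sym)

lemma betaeta_eq_trans [trans]: "s =\<^sub>\<beta>\<^sub>\<eta> t \<Longrightarrow> t =\<^sub>\<beta>\<^sub>\<eta> u \<Longrightarrow> s =\<^sub>\<beta>\<^sub>\<eta> u"
  unfolding betaeta_eq_def by (rule equivclp_trans)

lemma betaeta_eq_beta: "App (Abs s) t =\<^sub>\<beta>\<^sub>\<eta> subst s t 0"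
  unfolding betaeta_eq_def by (blast intro: step.beta)

lemma betaeta_eq_eta: "Abs (App (lift s 0) (Var 0)) =\<^sub>\<beta>\<^sub>\<eta> s"
  unfolding betaeta_eq_def by (blast intro: step.eta)

lemma betaeta_eq_cong:
  assumes "\<And>s t. step s t \<Longrightarrow> step (f s) (f t)" and "s =\<^sub>\<beta>\<^sub>\<eta> t"
  shows "f s =\<^sub>\<beta>\<^sub>\<eta> f t"
  using assms(2) unfolding betaeta_eq_def
proof (induction rule: equivclp_induct)
  case (step u v)
  then show ?case using assms(1) by (meson equivclp_into_equivclp)
qed simp

lemma betaeta_eq_AppL: "s =\<^sub>\<beta>\<^sub>\<eta> s' \<Longrightarrow> App s t =\<^sub>\<beta>\<^sub>\<eta> App s' t"
  by (rule betaeta_eq_cong[where f = "\<lambda>s. App s t"]) (auto intro: step.appL)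

lemma betaeta_eq_AppR: "t =\<^sub>\<beta>\<^sub>\<eta> t' \<Longrightarrow> App s t =\<^sub>\<beta>\<^sub>\<eta> App s t'"
  by (rule betaeta_eq_cong[where f = "App s"]) (auto intro: step.appR)

lemma betaeta_eq_Abs: "s =\<^sub>\<beta>\<^sub>\<eta> s' \<Longrightarrow> Abs s =\<^sub>\<beta>\<^sub>\<eta> Abs s'"
  by (rule betaeta_eq_cong[where f = Abs]) (auto intro: step.abs)

lemma betaeta_closedD:
  "betaeta_closed r \<Longrightarrow> r t t' \<Longrightarrow> t =\<^sub>\<beta>\<^sub>\<eta> s \<Longrightarrow> t' =\<^sub>\<beta>\<^sub>\<eta> s' \<Longrightarrow> r s s'"
  unfolding betaeta_closed_def by blast

lemma betaeta_closed_applied: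
  "betaeta_closed r \<Longrightarrow> betaeta_closed (\<lambda>u u'. r (App u a) u')"
  unfolding betaeta_closed_def by (blast intro: betaeta_eq_AppL)

lemma betaeta_closed_expandL:
  "betaeta_closed r \<Longrightarrow> r t t' \<Longrightarrow> s =\<^sub>\<beta>\<^sub>\<eta> t \<Longrightarrow> r s t'"
  by (rule betaeta_closedD[OF _ _ betaeta_eq_sym betaeta_eq_refl])


lemma lift_lift: "i \<le> k \<Longrightarrow> lift (lift t i) (Suc k) = lift (lift t k) i"
  by (induction t arbitrary: i k) auto

lemma subst_lift [simp]: "subst (lift t k) s k = t"
  by (induction t arbitrary: k s) auto

lemma lift_subst: "i \<le> j \<Longrightarrow> lift (subst t s j) i = subst (lift t i) (lift s i) (Suc j)"
  by (induction t arbitrary: i j s) (auto simp: lift_lift)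

primrec closed_at :: "nat \<Rightarrow> dB \<Rightarrow> bool" where
  "closed_at k (Var i) \<longleftrightarrow> i < k"
| "closed_at k (App s t) \<longleftrightarrow> closed_at k s \<and> closed_at k t"
| "closed_at k (Abs s) \<longleftrightarrow> closed_at (Suc k) s"

lemma closed_at_mono: "closed_at k t \<Longrightarrow> k \<le> j \<Longrightarrow> closed_at j t"
  by (induction t arbitrary: k j) auto

lemma closed_at_lift: "closed_at k t \<Longrightarrow> closed_at (Suc k) (lift t j)"
  by (induction t arbitrary: k j) auto

lemma lift_closed: "closed_at k t \<Longrightarrow> k \<le> j \<Longrightarrow> lift t j = t"
  by (induction t arbitrary: k j) auto

lemma subst_closed: "closed_at k t \<Longrightarrow> k \<le> j \<Longrightarrow> subst t s j = t"
  by (induction t arbitrary: k j s) auto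

lemma lift_comp [simp]: "lift (comp t t') k = comp (lift t k) (lift t' k)"
  by (simp add: comp_def lift_lift)

lemma subst_comp [simp]: "subst (comp t t') s k = comp (subst t s k) (subst t' s k)"
  by (simp add: comp_def lift_subst)

lemma closed_at_comp: "closed_at k t \<Longrightarrow> closed_at k t' \<Longrightarrow> closed_at k (comp t t')"
  by (simp add: comp_def closed_at_lift)

lemma closed_fmap': "closed_at 0 (fmap' x R)"
proof (induction R arbitrary: x)
  case (Arr R R')
  then have "closed_at (Suc (Suc 0)) (fmap' x R)" "closed_at (Suc (Suc 0)) (fmap' x R')"
    using closed_at_mono by blast+
  then show ?case by (simp add: closed_at_comp)
qed (auto simp: I_def K_def intro: closed_at_mono)

lemma lift_fmap' [simp]: "lift (fmap' x R) j = fmap' x R"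
  using closed_fmap' lift_closed by blast

lemma subst_fmap' [simp]: "subst (fmap' x R) s j = fmap' x R"
  using closed_fmap' subst_closed by blast

lemma subst_fold [simp]: "subst fold s k = fold"
  by (simp add: fold_def)


lemma App_I: "App I t =\<^sub>\<beta>\<^sub>\<eta> t"
  using betaeta_eq_beta[of "Var 0" t] by (simp add: I_def)

lemma App_KI: "App (App (App K I) s) t =\<^sub>\<beta>\<^sub>\<eta> t"
proof -
  have "App K I =\<^sub>\<beta>\<^sub>\<eta> Abs I"
    using betaeta_eq_beta[of "Abs (Var 1)" I] by (simp add: K_def I_def)
  then have "App (App (App K I) s) t =\<^sub>\<beta>\<^sub>\<eta> App (App (Abs I) s) t"
    by (intro betaeta_eq_AppL)
  also have "\<dots> =\<^sub>\<beta>\<^sub>\<eta> App I t"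
    using betaeta_eq_beta[of I s] by (intro betaeta_eq_AppL) (simp add: I_def)
  also have "\<dots> =\<^sub>\<beta>\<^sub>\<eta> t"
    by (rule App_I)
  finally show ?thesis .
qed

lemma App_comp: "App (comp s t) u =\<^sub>\<beta>\<^sub>\<eta> App s (App t u)"
  using betaeta_eq_beta[of "App (lift s 0) (App (lift t 0) (Var 0))" u] by (simp add: comp_def)

lemma App_fold: "App (App fold a) u =\<^sub>\<beta>\<^sub>\<eta> App u a"
proof -
  have "App fold a =\<^sub>\<beta>\<^sub>\<eta> Abs (App (Var 0) (lift a 0))"
    using betaeta_eq_beta[of "Abs (App (Var 0) (Var 1))" a] by (simp add: fold_def)
  then have "App (App fold a) u =\<^sub>\<beta>\<^sub>\<eta> App (Abs (App (Var 0) (lift a 0))) u"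
    by (rule betaeta_eq_AppL)
  also have "\<dots> =\<^sub>\<beta>\<^sub>\<eta> App u a"
    using betaeta_eq_beta[of "App (Var 0) (lift a 0)" u] by simp
  finally show ?thesis .
qed

lemma App_inn: "App (App (inn X R) b) a =\<^sub>\<beta>\<^sub>\<eta> App a (App (App (fmap X R) (App fold a)) b)"
proof -
  let ?body = "App (Var 0) (App (App (fmap X R) (App fold (Var 0))) (lift b 0))"
  have "App (inn X R) b =\<^sub>\<beta>\<^sub>\<eta> Abs ?body"
    using betaeta_eq_beta[of "Abs (App (Var 0) (App (App (fmap X R) (App fold (Var 0))) (Var 1)))" b]
    by (simp add: inn_def fmap_def)
  then have "App (App (inn X R) b) a =\<^sub>\<beta>\<^sub>\<eta> App (Abs ?body) a"
    by (rule betaeta_eq_AppL)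
  also have "\<dots> =\<^sub>\<beta>\<^sub>\<eta> App a (App (App (fmap X R) (App fold a)) b)"
    using betaeta_eq_beta[of ?body a] by (simp add: fmap_def)
  finally show ?thesis .
qed

lemma App_fmap'_Arr:
  "App (App (App (fmap' x (Arr R R')) f) b) c =\<^sub>\<beta>\<^sub>\<eta>
     App (App (fmap' x R') f) (App b (App (App (fmap' x R) f) c))"
proof -
  let ?body = "comp (App (fmap' x R') (lift f 0)) (comp (Var 0) (App (fmap' x R) (lift f 0)))"
  have "App (fmap' x (Arr R R')) f =\<^sub>\<beta>\<^sub>\<eta> Abs ?body"
    using betaeta_eq_beta[of "Abs (comp (App (fmap' x R') (Var 1)) (comp (Var 0) (App (fmap' x R) (Var 1))))" f]
    by simp
  then have "App (App (App (fmap' x (Arr R R')) f) b) c =\<^sub>\<beta>\<^sub>\<eta> App (App (Abs ?body) b) c"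
    by (intro betaeta_eq_AppL)
  also have "\<dots> =\<^sub>\<beta>\<^sub>\<eta> App (comp (App (fmap' x R') f) (comp b (App (fmap' x R) f))) c"
    using betaeta_eq_beta[of ?body b] by (intro betaeta_eq_AppL) simp
  also have "\<dots> =\<^sub>\<beta>\<^sub>\<eta> App (App (fmap' x R') f) (App (comp b (App (fmap' x R) f)) c)"
    by (rule App_comp)
  also have "\<dots> =\<^sub>\<beta>\<^sub>\<eta> App (App (fmap' x R') f) (App b (App (App (fmap' x R) f) c))"
    by (intro betaeta_eq_AppR App_comp)
  finally show ?thesis .
qed

lemma App_fmap'_All:
  "App (App (fmap' x (All Y R)) f) b =\<^sub>\<beta>\<^sub>\<eta>
     App (App (fmap' (if x = Some Y then None else x) R) f) b"
proof (rule betaeta_eq_AppL)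
  show "App (fmap' x (All Y R)) f =\<^sub>\<beta>\<^sub>\<eta> App (fmap' (if x = Some Y then None else x) R) f"
    using betaeta_eq_beta[of "App (fmap' (if x = Some Y then None else x) R) (Var 0)" f] by simp
qed

lemma App_fmap'_None: "App (App (fmap' None R) f) b =\<^sub>\<beta>\<^sub>\<eta> b"
proof (induction R arbitrary: f b)
  case (TVar Y)
  then show ?case using App_KI by simp
next
  case (Arr R R')
  have "App (App (fmap' None (Arr R R')) f) b
      =\<^sub>\<beta>\<^sub>\<eta> Abs (App (App (App (fmap' None (Arr R R')) (lift f 0)) (lift b 0)) (Var 0))"
    using betaeta_eq_sym[OF betaeta_eq_eta[of "App (App (fmap' None (Arr R R')) f) b"]]
    by (simp only: lift.simps lift_fmap')
  also have "\<dots> =\<^sub>\<beta>\<^sub>\<eta> Abs (App (lift b 0) (Var 0))"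
  proof (rule betaeta_eq_Abs)
    let ?F = "fmap' None R" and ?F' = "fmap' None R'"
    have "App (App (App (fmap' None (Arr R R')) (lift f 0)) (lift b 0)) (Var 0)
        =\<^sub>\<beta>\<^sub>\<eta> App (App ?F' (lift f 0)) (App (lift b 0) (App (App ?F (lift f 0)) (Var 0)))"
      by (rule App_fmap'_Arr)
    also have "\<dots> =\<^sub>\<beta>\<^sub>\<eta> App (lift b 0) (App (App ?F (lift f 0)) (Var 0))"
      by (rule Arr.IH(2))
    also have "\<dots> =\<^sub>\<beta>\<^sub>\<eta> App (lift b 0) (Var 0)"
      by (intro betaeta_eq_AppR Arr.IH(1))
    finally show "App (App (App (fmap' None (Arr R R')) (lift f 0)) (lift b 0)) (Var 0)
        =\<^sub>\<beta>\<^sub>\<eta> App (lift b 0) (Var 0)" .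
  qed
  also have "\<dots> =\<^sub>\<beta>\<^sub>\<eta> b"
    by (rule betaeta_eq_eta)
  finally show ?case .
next
  case (All Y R)
  show ?case
    using App_fmap'_All[of None Y R f b] All.IH by (auto intro: betaeta_eq_trans)
qed


definition betaeta_closed_env :: "env \<Rightarrow> bool" where
  "betaeta_closed_env \<gamma> \<longleftrightarrow> (\<forall>Y r. \<gamma> Y = Some r \<longrightarrow> betaeta_closed r)"

lemma betaeta_closed_env_upd:
  "betaeta_closed_env \<gamma> \<Longrightarrow> betaeta_closed r \<Longrightarrow> betaeta_closed_env (\<gamma>(X \<mapsto> r))"
  by (simp add: betaeta_closed_env_def)

lemma betaeta_closed_interp: "betaeta_closed_env \<gamma> \<Longrightarrow> betaeta_closed (interp \<gamma> T)"
proof (induction T arbitrary: \<gamma>)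
  case (TVar Y)
  then show ?case
    by (cases "\<gamma> Y") (simp add: betaeta_closed_def, auto simp: betaeta_closed_env_def)
next
  case (Arr T T')
  have "betaeta_closed (interp \<gamma> T')"
    by (rule Arr.IH(2)[OF Arr.prems])
  then show ?case
    unfolding betaeta_closed_def interp.simps by (meson betaeta_closedD betaeta_eq_AppL)
next
  case (All Y T)
  have IH: "betaeta_closed (interp (\<gamma>(Y \<mapsto> q)) T)" if "betaeta_closed q" for q
    by (rule All.IH[OF betaeta_closed_env_upd[OF All.prems that]])
  show ?case
    unfolding betaeta_closed_def
  proof (intro allI impI)
    fix t t' s s'
    assume related: "interp \<gamma> (All Y T) t t' \<and> t =\<^sub>\<beta>\<^sub>\<eta> s \<and> t' =\<^sub>\<beta>\<^sub>\<eta> s'"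
    show "interp \<gamma> (All Y T) s s'"
      unfolding interp.simps
    proof (intro allI impI)
      fix q
      assume "betaeta_closed q"
      with related show "interp (\<gamma>(Y \<mapsto> q)) T s s'"
        using betaeta_closedD[OF IH] by auto
    qed
  qed
qed

lemma interp_fmap:
  assumes \<gamma>: "betaeta_closed_env \<gamma>" and "betaeta_closed r" and "betaeta_closed r'"
    and f: "\<And>u u'. r' u u' \<Longrightarrow> r (App f u) u'"
    and "occ X p R"
    and "interp (\<gamma>(X \<mapsto> if p then r' else r)) R b b'"
  shows "interp (\<gamma>(X \<mapsto> if p then r else r')) R (App (App (fmap X R) f) b) b'"
  using \<gamma> assms(5,6)
proof (induction R arbitrary: \<gamma> p b b')
  case (TVar Y)
  show ?case
  proof (cases "Y = X")
    case True
    with TVar.prems have p and "r (App f b) b'"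
      by (simp_all add: f)
    with True show ?thesis
      using betaeta_closed_expandL[OF \<open>betaeta_closed r\<close> _ betaeta_eq_AppL[OF App_I]]
      by (simp add: fmap_def)
  next
    case False
    have "betaeta_closed (interp \<gamma> (TVar Y))"
      by (rule betaeta_closed_interp[OF TVar.prems(1)])
    with False TVar.prems show ?thesis
      using betaeta_closed_expandL[OF _ _ App_KI] by (simp add: fmap_def)
  qed
next
  case (Arr R1 R2)
  let ?src = "\<gamma>(X \<mapsto> if p then r' else r)" and ?tgt = "\<gamma>(X \<mapsto> if p then r else r')"
  have flip: "(if \<not> p then r' else r) = (if p then r else r')" "(if \<not> p then r else r') = (if p then r' else r)"
    by simp_all
  from Arr.prems have "occ X (\<not> p) R1" "occ X p R2"
    by simp_all
  note IH1 = Arr.IH(1)[OF Arr.prems(1) \<open>occ X (\<not> p) R1\<close>, unfolded flip]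
    and IH2 = Arr.IH(2)[OF Arr.prems(1) \<open>occ X p R2\<close>]
  show ?case
    unfolding interp.simps
  proof (intro allI impI)
    fix c c'
    assume "interp ?tgt R1 c c'"
    then have "interp ?src R1 (App (App (fmap X R1) f) c) c'"
      by (rule IH1)
    then have "interp ?src R2 (App b (App (App (fmap X R1) f) c)) (App b' c')"
      using Arr.prems(3) unfolding interp.simps by blast
    then have "interp ?tgt R2 (App (App (fmap X R2) f) (App b (App (App (fmap X R1) f) c))) (App b' c')"
      by (rule IH2)
    moreover have "betaeta_closed (interp ?tgt R2)"
      by (simp add: betaeta_closed_interp betaeta_closed_env_upd Arr.prems(1) assms(2,3))
    ultimately show "interp ?tgt R2 (App (App (App (fmap X (Arr R1 R2)) f) b) c) (App b' c')"
      using betaeta_closed_expandL App_fmap'_Arr unfolding fmap_def by blast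
  qed
next
  case (All Y R)
  show ?case
    unfolding interp.simps
  proof (intro allI impI)
    fix s
    assume s: "betaeta_closed s"
    have hb: "interp (\<gamma>(X \<mapsto> if p then r' else r, Y \<mapsto> s)) R b b'"
      using All.prems(3) s unfolding interp.simps by blast
    show "interp (\<gamma>(X \<mapsto> if p then r else r', Y \<mapsto> s)) R (App (App (fmap X (All Y R)) f) b) b'"
    proof (cases "Y = X")
      case True
      from hb True have "interp (\<gamma>(X \<mapsto> s)) R b b'"
        by simp
      moreover have "betaeta_closed (interp (\<gamma>(X \<mapsto> s)) R)"
        by (simp add: betaeta_closed_interp betaeta_closed_env_upd All.prems(1) s)
      moreover have "App (App (fmap X (All Y R)) f) b =\<^sub>\<beta>\<^sub>\<eta> b"
        using App_fmap'_All[of "Some X" Y R f b] App_fmap'_None True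
        by (auto simp: fmap_def intro: betaeta_eq_trans)
      ultimately show ?thesis
        using True betaeta_closed_expandL by simp
    next
      case False
      then have swap: "\<gamma>(X \<mapsto> q, Y \<mapsto> s) = \<gamma>(Y \<mapsto> s, X \<mapsto> q)" for q
        by (rule fun_upd_twist[symmetric])
      have "betaeta_closed_env (\<gamma>(Y \<mapsto> s))"
        by (rule betaeta_closed_env_upd[OF All.prems(1) s])
      moreover have "occ X p R"
        using All.prems(2) by simp
      moreover have "interp (\<gamma>(Y \<mapsto> s, X \<mapsto> if p then r' else r)) R b b'"
        using hb by (simp only: swap)
      ultimately have "interp (\<gamma>(Y \<mapsto> s, X \<mapsto> if p then r else r')) R (App (App (fmap X R) f) b) b'"
        by (rule All.IH)
      moreover have "betaeta_closed (interp (\<gamma>(Y \<mapsto> s, X \<mapsto> if p then r else r')) R)"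
        by (simp add: betaeta_closed_interp betaeta_closed_env_upd All.prems(1) s assms(2,3))
      moreover have "App (App (fmap X (All Y R)) f) b =\<^sub>\<beta>\<^sub>\<eta> App (App (fmap X R) f) b"
        using App_fmap'_All[of "Some X" Y R f b] False by (simp add: fmap_def)
      ultimately show ?thesis
        using betaeta_closed_expandL by (simp only: swap)
    qed
  qed
qed


lemma interp_inn:
  assumes \<gamma>: "betaeta_closed_env \<gamma>" and r: "betaeta_closed r" and "occ X True R"
    and a: "interp (\<gamma>(X \<mapsto> r)) (Arr R (TVar X)) a a'"
  shows "interp (\<gamma>(X \<mapsto> (\<lambda>u u'. r (App u a) u'))) (Arr R (TVar X)) (inn X R) a'"
proof -
  define r' where "r' = (\<lambda>u u'. r (App u a) u')"
  have "betaeta_closed r'"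
    unfolding r'_def using r by (rule betaeta_closed_applied)
  moreover have "r (App (App fold a) u) u'" if "r' u u'" for u u'
    using betaeta_closed_expandL[OF r _ App_fold] that by (simp add: r'_def)
  ultimately have fmap_fold: "interp (\<gamma>(X \<mapsto> r)) R (App (App (fmap X R) (App fold a)) b) b'"
    if "interp (\<gamma>(X \<mapsto> r')) R b b'" for b b'
    using interp_fmap[OF \<gamma> r, of r' "App fold a" X True R b b'] \<open>occ X True R\<close> that by simp
  have "interp (\<gamma>(X \<mapsto> r')) (Arr R (TVar X)) (inn X R) a'"
    unfolding interp.simps(2)
  proof (intro allI impI)
    fix b b'
    assume "interp (\<gamma>(X \<mapsto> r')) R b b'"
    then have "r (App a (App (App (fmap X R) (App fold a)) b)) (App a' b')"
      using a fmap_fold by simp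
    then show "interp (\<gamma>(X \<mapsto> r')) (TVar X) (App (inn X R) b) (App a' b')"
      using betaeta_closed_expandL[OF r _ App_inn] by (simp add: r'_def)
  qed
  then show ?thesis
    unfolding r'_def .
qed

lemma interp_rebuild:
  assumes \<gamma>: "betaeta_closed_env \<gamma>" and "occ X True R"
    and t: "interp \<gamma> (Dparam X R) t t'"
  shows "interp \<gamma> (Dparam X R) (App (rebuild X R) t) t'"
  unfolding Dparam_def interp.simps(3)
proof (intro allI impI)
  fix r
  assume r: "betaeta_closed r"
  show "interp (\<gamma>(X \<mapsto> r)) (Arr (Arr R (TVar X)) (TVar X)) (App (rebuild X R) t) t'"
    unfolding interp.simps(2)[of _ "Arr R (TVar X)"]
  proof (intro allI impI)
    fix a a'
    assume a: "interp (\<gamma>(X \<mapsto> r)) (Arr R (TVar X)) a a'"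
    have "interp (\<gamma>(X \<mapsto> (\<lambda>u u'. r (App u a) u'))) (Arr (Arr R (TVar X)) (TVar X)) t t'"
      using t betaeta_closed_applied[OF r]
      unfolding Dparam_def interp.simps(3) by blast
    then have "r (App (App t (inn X R)) a) (App t' a')"
      using interp_inn[OF \<gamma> r \<open>occ X True R\<close> a] by simp
    moreover have "App (App (rebuild X R) t) a =\<^sub>\<beta>\<^sub>\<eta> App (App t (inn X R)) a"
      unfolding rebuild_def by (intro betaeta_eq_AppL App_fold)
    ultimately show "interp (\<gamma>(X \<mapsto> r)) (TVar X) (App (App (rebuild X R) t) a) (App t' a')"
      using betaeta_closed_expandL[OF r] by simp
  qed
qed

theorem mainTheorem10:
  fixes X :: tvar and R :: ty and \<gamma> :: env
  assumes "occ X True R"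
    and "finite (dom \<gamma>)"
    and "\<forall>Y r. \<gamma> Y = Some r \<longrightarrow> betaeta_closed r"
    and "ftv (Dparam X R) \<subseteq> dom \<gamma>"
  shows "interp \<gamma> (Arr (Dparam X R) (Dparam X R)) (rebuild X R) I"
proof -
  have \<gamma>: "betaeta_closed_env \<gamma>"
    using assms(3) unfolding betaeta_closed_env_def .
  have "interp \<gamma> (Dparam X R) (App (rebuild X R) t) (App I t')"
    if "interp \<gamma> (Dparam X R) t t'" for t t'
    using betaeta_closedD[OF betaeta_closed_interp[OF \<gamma>] interp_rebuild[OF \<gamma> assms(1) that]
        betaeta_eq_refl betaeta_eq_sym[OF App_I]] .
  then show ?thesis
    by simp
qed

end
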